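(* Let $m\le n$ be positive integers, $A$ a Hermitian $n\times n$ matrix, and $v_1,\dots,v_m\in\mathbb C^n$ orthonormal vectors satisfying $(A-\lambda_jI)v_j=r_j$ for real scalars $\lambda_j$ and vectors $r_j\in\mathbb C^n$, $1\le j\le m$. Then there are $m$ eigenvalues $\alpha_1,\dots,\alpha_m$ of $A$ (counted with multiplicity), in one-to-one correspondence with the $\lambda_j$, such that $|\lambda_j-\alpha_j|\le2m\sup_{1\le i\le m}\|r_i\|_2$ for all $1\le j\le m$. *)

theory Defs
  imports "Jordan_Normal_Form.Char_Poly"
begin

definition cinner :: "complex vec \<Rightarrow> complex vec \<Rightarrow> complex" where
  "cinner v w = (\<Sum>i<dim_vec v. v $ i * cnj (w $ i))"

definition norm2 :: "complex vec \<Rightarrow> real" where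
  "norm2 v = sqrt (\<Sum>i<dim_vec v. (cmod (v $ i))^2)"

definition hermitian_mat :: "complex mat \<Rightarrow> bool" where
  "hermitian_mat A \<longleftrightarrow> dim_row A = dim_col A \<and>
     (\<forall>i<dim_row A. \<forall>j<dim_col A. A $$ (i,j) = cnj (A $$ (j,i)))"

end

theory Submission
  imports Defs "Jordan_Normal_Form.Schur_Decomposition" "HOL-Analysis.Convex"
begin

(*
  Diagonalise A unitarily, A = P D P^*, with D = diag(alpha_1, ..., alpha_n). The coordinate
  vectors c_j = P^* v_j are again orthonormal, and ||r_j||^2 = sum_k |alpha_k - lambda_j|^2 |c_jk|^2.
  With eps = max_i ||r_i||, let N(j) be the set of indices k with |lambda_j - alpha_k| <= 2 m eps;
  the required injection is a system of distinct representatives of the sets N(j), which exists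
  by Hall's theorem. If Hall's condition failed for some S, then |N(S)| < |S|, so some nonzero
  combination w = sum_{j in S} x_j c_j vanishes on N(S). Orthonormality gives
  ||w||^2 = sum_j |x_j|^2 >= M^2 with M = max_j |x_j|, while by Chebyshev's inequality every c_j
  has squared mass at most 1/(2m)^2 off N(S), whence ||w||^2 <= |S|^2 M^2 / (2m)^2 <= M^2 / 4,
  forcing x = 0.
*)

lemma mat_adjoint_dim [simp]:
  "dim_row (mat_adjoint A) = dim_col A" "dim_col (mat_adjoint A) = dim_row A"
  unfolding mat_adjoint_def by simp_all

lemma index_mat_adjoint [simp]:
  "i < dim_col A \<Longrightarrow> j < dim_row A \<Longrightarrow> mat_adjoint A $$ (i, j) = conjugate (A $$ (j, i))"
  unfolding mat_adjoint_def by (simp add: mat_of_rows_index)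

lemma mat_adjoint_carrier [simp]: "A \<in> carrier_mat n m \<Longrightarrow> mat_adjoint A \<in> carrier_mat m n"
  by auto

lemma mat_adjoint_adjoint [simp]: "mat_adjoint (mat_adjoint A) = A"
  by (rule eq_matI) auto

lemma mat_adjoint_one [simp]: "mat_adjoint (1\<^sub>m n :: complex mat) = 1\<^sub>m n"
  by (rule eq_matI) auto

lemma mat_adjoint_zero [simp]: "mat_adjoint (0\<^sub>m n m :: complex mat) = 0\<^sub>m m n"
  by (rule eq_matI) auto

lemma mat_adjoint_mult:
  fixes A B :: "complex mat"
  assumes "A \<in> carrier_mat n k" "B \<in> carrier_mat k m"
  shows "mat_adjoint (A * B) = mat_adjoint B * mat_adjoint A"
proof (rule eq_matI)
  fix i j assume "i < dim_row (mat_adjoint B * mat_adjoint A)" "j < dim_col (mat_adjoint B * mat_adjoint A)"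
  with assms show "mat_adjoint (A * B) $$ (i, j) = (mat_adjoint B * mat_adjoint A) $$ (i, j)"
    by (simp add: scalar_prod_def sum_conjugate conjugate_dist_mul mult.commute)
qed (use assms in auto)

lemma mat_adjoint_four_block:
  assumes "A \<in> carrier_mat a a" "B \<in> carrier_mat a b" "C \<in> carrier_mat b a" "D \<in> carrier_mat b b"
  shows "mat_adjoint (four_block_mat A B C D)
    = four_block_mat (mat_adjoint A) (mat_adjoint C) (mat_adjoint B) (mat_adjoint D)"
proof (rule eq_matI)
  fix i j
  assume "i < dim_row (four_block_mat (mat_adjoint A) (mat_adjoint C) (mat_adjoint B) (mat_adjoint D))"
    "j < dim_col (four_block_mat (mat_adjoint A) (mat_adjoint C) (mat_adjoint B) (mat_adjoint D))"
  with assms show "mat_adjoint (four_block_mat A B C D) $$ (i, j)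
    = four_block_mat (mat_adjoint A) (mat_adjoint C) (mat_adjoint B) (mat_adjoint D) $$ (i, j)"
    by (cases "i < a"; cases "j < a") (simp_all add: four_block_mat_def)
qed (use assms in simp_all)

lemma hermitian_mat_adjoint:
  assumes "hermitian_mat A"
  shows "mat_adjoint A = A"
proof (rule eq_matI)
  fix i j assume "i < dim_row A" "j < dim_col A"
  with assms show "mat_adjoint A $$ (i, j) = A $$ (i, j)"
    unfolding hermitian_mat_def by (metis complex_cnj_cnj conjugate_complex_def index_mat_adjoint)
qed (use assms in \<open>auto simp: hermitian_mat_def\<close>)

lemma cscalar_mult_mat_vec_adjoint:
  fixes M :: "complex mat"
  assumes "M \<in> carrier_mat n m" "x \<in> carrier_vec m" "y \<in> carrier_vec n"
  shows "(M *\<^sub>v x) \<bullet>c y = x \<bullet>c (mat_adjoint M *\<^sub>v y)"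
proof -
  have "(M *\<^sub>v x) \<bullet>c y = (\<Sum>i<n. \<Sum>k<m. x $ k * (M $$ (i, k) * conjugate (y $ i)))"
    using assms by (simp add: scalar_prod_def lessThan_atLeast0 sum_distrib_left sum_distrib_right mult_ac)
  also have "\<dots> = (\<Sum>k<m. \<Sum>i<n. x $ k * (M $$ (i, k) * conjugate (y $ i)))"
    by (rule sum.swap)
  also have "\<dots> = x \<bullet>c (mat_adjoint M *\<^sub>v y)"
    using assms by (simp add: scalar_prod_def lessThan_atLeast0 sum_distrib_left sum_conjugate
        conjugate_dist_mul)
  finally show ?thesis .
qed

lemma unitary_cscalar:
  fixes U :: "complex mat"
  assumes "U \<in> carrier_mat n n" "mat_adjoint U * U = 1\<^sub>m n" "x \<in> carrier_vec n" "y \<in> carrier_vec n"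
  shows "(U *\<^sub>v x) \<bullet>c (U *\<^sub>v y) = x \<bullet>c y"
proof -
  have "mat_adjoint U *\<^sub>v (U *\<^sub>v y) = y"
    using assms by (metis assoc_mult_mat_vec mat_adjoint_carrier one_mult_mat_vec)
  then show ?thesis using assms by (simp add: cscalar_mult_mat_vec_adjoint[of U n n])
qed

lemma cscalar_self_norm2: "w \<bullet>c w = complex_of_real ((norm2 w)\<^sup>2)"
proof -
  have "w \<bullet>c w = (\<Sum>i<dim_vec w. w $ i * cnj (w $ i))"
    by (simp add: scalar_prod_def lessThan_atLeast0)
  also have "\<dots> = complex_of_real (\<Sum>i<dim_vec w. (cmod (w $ i))\<^sup>2)"
    unfolding of_real_sum complex_norm_square ..
  finally show ?thesis by (simp add: norm2_def sum_nonneg of_real_sum)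
qed

lemma norm2_nonneg: "0 \<le> norm2 v"
  by (simp add: norm2_def sum_nonneg)

lemma unitary_norm2:
  fixes U :: "complex mat"
  assumes "U \<in> carrier_mat n n" "mat_adjoint U * U = 1\<^sub>m n" "x \<in> carrier_vec n"
  shows "norm2 (U *\<^sub>v x) = norm2 x"
proof -
  have "complex_of_real ((norm2 (U *\<^sub>v x))\<^sup>2) = complex_of_real ((norm2 x)\<^sup>2)"
    by (simp only: cscalar_self_norm2[symmetric] unitary_cscalar[OF assms(1,2,3,3)])
  then have "(norm2 (U *\<^sub>v x))\<^sup>2 = (norm2 x)\<^sup>2" by (simp only: of_real_eq_iff)
  then show ?thesis
    using norm2_nonneg[of "U *\<^sub>v x"] norm2_nonneg[of x] by (simp add: power2_eq_iff_nonneg)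
qed

lemma norm2_pos:
  assumes "w \<in> carrier_vec n" "w \<noteq> 0\<^sub>v n"
  shows "0 < norm2 w"
proof -
  have "norm2 w \<noteq> 0" using assms cscalar_self_norm2[of w] by fastforce
  with norm2_nonneg[of w] show ?thesis by linarith
qed

lemma corthogonal_inv_eq_mat_adjoint:
  assumes "\<forall>w\<in>set (cols A). w \<bullet>c w = 1"
  shows "corthogonal_inv A = mat_adjoint A"
  unfolding corthogonal_inv_def mat_adjoint_def vec_inv_def
  using assms by (intro arg_cong[where f = "mat_of_rows _"] map_cong) auto

section \<open>Unitary Schur decomposition\<close>

definition vec_normalize :: "complex vec \<Rightarrow> complex vec" where
  "vec_normalize w = complex_of_real (1 / norm2 w) \<cdot>\<^sub>v w"

lemma vec_normalize_carrier [simp]: "w \<in> carrier_vec n \<Longrightarrow> vec_normalize w \<in> carrier_vec n"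
  unfolding vec_normalize_def by simp

lemma cscalar_vec_normalize:
  assumes "v \<in> carrier_vec n" "w \<in> carrier_vec n"
  shows "vec_normalize v \<bullet>c vec_normalize w = complex_of_real (1 / (norm2 v * norm2 w)) * (v \<bullet>c w)"
  unfolding vec_normalize_def using assms by (simp add: conjugate_smult_vec)

lemma vec_normalize_unit:
  assumes "w \<in> carrier_vec n" "w \<noteq> 0\<^sub>v n"
  shows "vec_normalize w \<bullet>c vec_normalize w = 1"
  using norm2_pos[OF assms]
  by (subst cscalar_vec_normalize[OF assms(1) assms(1)]) (simp add: cscalar_self_norm2 power2_eq_square)

lemma corthogonal_map_vec_normalize:
  assumes ws: "set ws \<subseteq> carrier_vec n" and orth: "corthogonal ws"
  shows "corthogonal (map vec_normalize ws)" "\<forall>w\<in>set (map vec_normalize ws). w \<bullet>c w = 1"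
proof -
  have nonzero: "ws ! i \<noteq> 0\<^sub>v n" if "i < length ws" for i
    using corthogonalD[OF orth that that] by auto
  show "corthogonal (map vec_normalize ws)"
  proof (rule corthogonalI)
    fix i j assume "i < length (map vec_normalize ws)" "j < length (map vec_normalize ws)"
    then have ij: "i < length ws" "j < length ws" by simp_all
    then have "ws ! i \<in> carrier_vec n" "ws ! j \<in> carrier_vec n" using ws by auto
    moreover have "0 < norm2 (ws ! i)" "0 < norm2 (ws ! j)"
      using norm2_pos calculation nonzero ij by auto
    ultimately show "(map vec_normalize ws ! i \<bullet>c map vec_normalize ws ! j = 0) = (i \<noteq> j)"
      using corthogonalD[OF orth ij] ij by (simp add: cscalar_vec_normalize[of _ n])
  qed
  show "\<forall>w\<in>set (map vec_normalize ws). w \<bullet>c w = 1"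
  proof
    fix w assume "w \<in> set (map vec_normalize ws)"
    then obtain i where "i < length ws" "w = vec_normalize (ws ! i)" by (auto simp: in_set_conv_nth)
    moreover have "ws ! i \<in> carrier_vec n" using ws \<open>i < length ws\<close> nth_mem by blast
    ultimately show "w \<bullet>c w = 1" using nonzero vec_normalize_unit by blast
  qed
qed

lemma orthonormal_basis_extension:
  assumes v: "v \<in> carrier_vec n" "v \<noteq> 0\<^sub>v n"
  obtains ws where "set ws \<subseteq> carrier_vec n" "corthogonal ws" "length ws = n"
    "\<forall>w\<in>set ws. w \<bullet>c w = 1" "hd ws = vec_normalize v"
proof -
  have n: "n \<noteq> 0" using v by auto
  interpret cof_vec_space n "TYPE(complex)" .
  define b where "b = basis_completion v"
  have b: "set b \<subseteq> carrier_vec n" "distinct b" "\<not> lin_dep (set b)" "length b = n" "hd b = v"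
    using basis_completion[OF v] unfolding b_def by auto
  then obtain vs where bv: "b = v # vs" using n by (cases b) auto
  have gs: "set (gram_schmidt n b) \<subseteq> carrier_vec n" "corthogonal (gram_schmidt n b)"
    "length (gram_schmidt n b) = n"
    using gram_schmidt_result[OF b(1-3) refl] b(4) by auto
  moreover have "hd (map vec_normalize (gram_schmidt n b)) = vec_normalize v"
    using gs(3) n v(1) unfolding bv by (subst hd_map) auto
  ultimately show ?thesis
    using corthogonal_map_vec_normalize[OF gs(1,2)]
    by (intro that[of "map vec_normalize (gram_schmidt n b)"]) auto
qed

lemma unitary_deflation:
  fixes A :: "complex mat"
  assumes A: "A \<in> carrier_mat n n" and e: "eigenvalue A e"
  obtains W where "W \<in> carrier_mat n n" "mat_adjoint W * W = 1\<^sub>m n" "W * mat_adjoint W = 1\<^sub>m n"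
    "col (mat_adjoint W * A * W) 0 = vec n (\<lambda>i. if i = 0 then e else 0)"
proof -
  define v where "v = find_eigenvector A e"
  have v: "v \<in> carrier_vec n" "v \<noteq> 0\<^sub>v n" "A *\<^sub>v v = e \<cdot>\<^sub>v v"
    using find_eigenvector[OF A e] A unfolding v_def eigenvector_def by auto
  then have n: "n \<noteq> 0" by auto
  obtain ws where ws: "set ws \<subseteq> carrier_vec n" "corthogonal ws" "length ws = n"
      "\<forall>w\<in>set ws. w \<bullet>c w = 1" and hd_ws: "hd ws = vec_normalize v"
    using orthonormal_basis_extension[OF v(1,2)] by blast
  define W where "W = mat_of_cols n ws"
  have W: "W \<in> carrier_mat n n" unfolding W_def using ws by auto
  have W_inv: "corthogonal_inv W = mat_adjoint W"
    using ws unfolding W_def by (intro corthogonal_inv_eq_mat_adjoint) simp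
  have WW: "mat_adjoint W * W = 1\<^sub>m n"
    using corthogonal_inv_result[OF orthogonal_mat_of_cols[OF ws(1-3)]] W
    unfolding W_inv W_def[symmetric] inverts_mat_def by simp
  moreover have "W * mat_adjoint W = 1\<^sub>m n"
    using mat_mult_left_right_inverse[OF _ W WW] W by simp
  (* The first column of W is the normalised eigenvector, so W^* A W maps the first unit
     vector to e times itself. *)
  moreover have "col (mat_adjoint W * A * W) 0 = vec n (\<lambda>i. if i = 0 then e else 0)"
  proof -
    have "vec_normalize v \<noteq> 0\<^sub>v n" using vec_normalize_unit[OF v(1,2)] v(1) by auto
    moreover have "A *\<^sub>v vec_normalize v = e \<cdot>\<^sub>v vec_normalize v"
      using A v by (simp add: vec_normalize_def mult_mat_vec smult_smult_assoc mult.commute)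
    ultimately show ?thesis
      using corthogonal_col_ev_0[OF A _ _ _ n hd_ws ws(1-3)] v(1) unfolding W_def[symmetric] W_inv
      by simp
  qed
  ultimately show ?thesis using W that by blast
qed

lemma first_column_block_form:
  assumes A: "A \<in> carrier_mat (Suc k) (Suc k)"
    and col: "col A 0 = vec (Suc k) (\<lambda>i. if i = 0 then e else 0)"
  obtains A2 A3 where "A2 \<in> carrier_mat 1 k" "A3 \<in> carrier_mat k k"
    "A = four_block_mat (mat 1 1 (\<lambda>_. e)) A2 (0\<^sub>m k 1) A3"
proof -
  obtain A1 A2 A0 A3 where split: "split_block A 1 1 = (A1, A2, A0, A3)"
    by (cases "split_block A 1 1") auto
  have dims: "dim_row A = 1 + k" "dim_col A = 1 + k" using A by auto
  have entries: "A $$ (i, 0) = (if i = 0 then e else 0)" if "i < Suc k" for i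
    using arg_cong[OF col, of "\<lambda>v. v $ i"] A that by simp
  have "A1 = mat 1 1 (\<lambda>_. e)" "A0 = 0\<^sub>m k 1"
    using split entries A unfolding split_block_def Let_def by auto
  with split_block[OF split dims] that show ?thesis by simp
qed

lemma unitary_deflation_block:
  fixes A :: "complex mat"
  assumes A: "A \<in> carrier_mat (Suc k) (Suc k)" and e: "eigenvalue A e"
  obtains W A2 A3
  where "similar_mat_wit A (four_block_mat (mat 1 1 (\<lambda>_. e)) A2 (0\<^sub>m k 1) A3) W (mat_adjoint W)"
    "A2 \<in> carrier_mat 1 k" "A3 \<in> carrier_mat k k" "char_poly A = [:- e, 1:] * char_poly A3"
proof -
  obtain W where W: "W \<in> carrier_mat (Suc k) (Suc k)" "mat_adjoint W * W = 1\<^sub>m (Suc k)"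
      "W * mat_adjoint W = 1\<^sub>m (Suc k)"
    and col: "col (mat_adjoint W * A * W) 0 = vec (Suc k) (\<lambda>i. if i = 0 then e else 0)"
    using unitary_deflation[OF A e] by blast
  let ?A' = "mat_adjoint W * A * W"
  have "similar_mat_wit ?A' A (mat_adjoint W) W"
    using W A by (intro similar_mat_witI[of _ _ "Suc k"]) auto
  then have sim: "similar_mat_wit A ?A' W (mat_adjoint W)"
    by (rule similar_mat_wit_sym)
  have "?A' \<in> carrier_mat (Suc k) (Suc k)" using W A by auto
  then obtain A2 A3 where A2: "A2 \<in> carrier_mat 1 k" and A3: "A3 \<in> carrier_mat k k"
    and A': "?A' = four_block_mat (mat 1 1 (\<lambda>_. e)) A2 (0\<^sub>m k 1) A3"
    using first_column_block_form col by blast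
  have "char_poly A = char_poly ?A'"
    using sim char_poly_similar unfolding similar_mat_def by blast
  also have "\<dots> = char_poly (mat 1 1 (\<lambda>_. e)) * char_poly A3"
    unfolding A' by (rule char_poly_four_block_zeros_col[OF _ A2 A3]) auto
  also have "char_poly (mat 1 1 (\<lambda>_. e)) = [:- e, 1:]"
    by (simp add: char_poly_defs det_def sign_def)
  finally show ?thesis using that sim A2 A3 unfolding A' by blast
qed

lemma unitary_similar_block_extension:
  fixes A1 A2 A3 B P :: "complex mat"
  assumes sim: "similar_mat_wit A3 B P (mat_adjoint P)"
    and A1: "A1 \<in> carrier_mat 1 1" and A2: "A2 \<in> carrier_mat 1 k" and A3: "A3 \<in> carrier_mat k k"
  defines "P' \<equiv> four_block_mat (1\<^sub>m 1) (0\<^sub>m 1 k) (0\<^sub>m k 1) P"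
  shows "similar_mat_wit (four_block_mat A1 A2 (0\<^sub>m k 1) A3) (four_block_mat A1 (A2 * P) (0\<^sub>m k 1) B)
           P' (mat_adjoint P')"
proof -
  have P: "P \<in> carrier_mat k k" "P * mat_adjoint P = 1\<^sub>m k" using similar_mat_witD2[OF A3 sim] by auto
  have A2P: "A2 = A2 * P * mat_adjoint P"
    using A2 P by (simp add: assoc_mult_mat[of A2 1 k P k "mat_adjoint P" k])
  have "mat_adjoint P' = four_block_mat (1\<^sub>m 1) (0\<^sub>m 1 k) (0\<^sub>m k 1) (mat_adjoint P)"
    unfolding P'_def using P by (subst mat_adjoint_four_block[of _ 1 _ k]) auto
  moreover have "similar_mat_wit (four_block_mat A1 A2 (0\<^sub>m k 1) A3) (four_block_mat A1 (A2 * P) (0\<^sub>m k 1) B)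
      P' (four_block_mat (1\<^sub>m 1) (0\<^sub>m 1 k) (0\<^sub>m k 1) (mat_adjoint P))"
    unfolding P'_def using P A1 A2 A3 A2P
    by (intro similar_mat_wit_four_block[OF similar_mat_wit_refl[OF A1] sim]) auto
  ultimately show ?thesis by simp
qed

theorem unitary_schur_decomposition:
  fixes A :: "complex mat"
  assumes "A \<in> carrier_mat n n" "char_poly A = (\<Prod>e \<leftarrow> es. [:- e, 1:])"
  shows "\<exists>B P. similar_mat_wit A B P (mat_adjoint P) \<and> upper_triangular B \<and> diag_mat B = es"
  using assms
proof (induction es arbitrary: n A)
  case Nil
  then have "n = 0" using degree_monic_char_poly[of A n] by simp
  with Nil show ?case
    by (intro exI[of _ A] exI[of _ "1\<^sub>m n"]) (auto intro: similar_mat_wit_refl simp: diag_mat_def)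
next
  case (Cons e es n A)
  have cp: "char_poly A = [:- e, 1:] * (\<Prod>e \<leftarrow> es. [:- e, 1:])" using Cons.prems(2) by simp
  have "monic (\<Prod>e \<leftarrow> es. [:- e, 1:])" by (rule monic_prod_list) auto
  then have "degree (char_poly A) = Suc (degree (\<Prod>e \<leftarrow> es. [:- e, 1:]))"
    unfolding cp by (subst degree_mult_eq) auto
  then obtain k where n: "n = Suc k" using degree_monic_char_poly[OF Cons.prems(1)] by auto
  have "eigenvalue A e" using Cons.prems(1) cp by (simp add: eigenvalue_root_char_poly)
  then obtain W A2 A3
    where sim: "similar_mat_wit A (four_block_mat (mat 1 1 (\<lambda>_. e)) A2 (0\<^sub>m k 1) A3) W (mat_adjoint W)"
      and A2: "A2 \<in> carrier_mat 1 k" and A3: "A3 \<in> carrier_mat k k"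
      and cp': "char_poly A = [:- e, 1:] * char_poly A3"
    using unitary_deflation_block Cons.prems(1) unfolding n by blast
  have "char_poly A3 = (\<Prod>e \<leftarrow> es. [:- e, 1:])"
    using cp cp' by (metis mult_cancel_left pCons_eq_0_iff zero_neq_one)
  then obtain B P where IH: "similar_mat_wit A3 B P (mat_adjoint P)" "upper_triangular B" "diag_mat B = es"
    using Cons.IH[OF A3] by blast
  define P' where "P' = four_block_mat (1\<^sub>m 1) (0\<^sub>m 1 k) (0\<^sub>m k 1) P"
  define C where "C = four_block_mat (mat 1 1 (\<lambda>_. e)) (A2 * P) (0\<^sub>m k 1) B"
  have "similar_mat_wit A C (W * P') (mat_adjoint P' * mat_adjoint W)"
    using similar_mat_wit_trans[OF sim unitary_similar_block_extension[OF IH(1) _ A2 A3]]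
    unfolding C_def P'_def by simp
  moreover have "W \<in> carrier_mat n n" "P' \<in> carrier_mat n n"
    using similar_mat_witD2[OF Cons.prems(1) sim] similar_mat_witD2[OF A3 IH(1)] unfolding P'_def n
    by auto
  ultimately have "similar_mat_wit A C (W * P') (mat_adjoint (W * P'))"
    by (simp add: mat_adjoint_mult[of W n n])
  moreover have "upper_triangular C"
    unfolding C_def using IH(2) similar_mat_witD2[OF A3 IH(1)] by (intro upper_triangular_four_block) auto
  moreover have "diag_mat C = e # es"
  proof -
    have "diag_mat (mat 1 1 (\<lambda>_. e)) = [e]" by (simp add: diag_mat_def)
    then show ?thesis unfolding C_def
      using IH(3) diag_four_block_mat[of "mat 1 1 (\<lambda>_. e)" 1 B k] similar_mat_witD2[OF A3 IH(1)]
      by simp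
  qed
  ultimately show ?case by blast
qed

section \<open>Unitary diagonalization of Hermitian matrices\<close>

lemma similar_mat_wit_intertwines:
  assumes "A \<in> carrier_mat n n" "similar_mat_wit A B P Q"
  shows "Q * A = B * Q"
proof -
  have c: "B \<in> carrier_mat n n" "P \<in> carrier_mat n n" "Q \<in> carrier_mat n n" "Q * P = 1\<^sub>m n"
    and A: "A = P * B * Q"
    using similar_mat_witD2[OF assms] by auto
  have "Q * A = Q * (P * (B * Q))" unfolding A using c by (simp add: assoc_mult_mat[of P n n B n Q n])
  also have "\<dots> = (Q * P) * (B * Q)" using c by (intro assoc_mult_mat[symmetric]) auto
  also have "\<dots> = B * Q" unfolding c(4) using c by simp
  finally show ?thesis .
qed

lemma unitary_similar_self_adjoint:
  fixes A :: "complex mat"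
  assumes A: "A \<in> carrier_mat n n" and sim: "similar_mat_wit A B P (mat_adjoint P)"
    and self_adjoint: "mat_adjoint A = A"
  shows "mat_adjoint B = B"
proof -
  have c: "B \<in> carrier_mat n n" "P \<in> carrier_mat n n" "P * mat_adjoint P = 1\<^sub>m n"
    using similar_mat_witD2[OF A sim] by auto
  have "B = B * (mat_adjoint P * P)" using similar_mat_witD2[OF A sim] by simp
  also have "\<dots> = mat_adjoint P * A * P"
    using similar_mat_wit_intertwines[OF A sim] c A by (simp add: assoc_mult_mat[of _ n n _ n _ n])
  finally show ?thesis
    using c A self_adjoint by (simp add: mat_adjoint_mult[of _ n n _ n] assoc_mult_mat[of _ n n _ n _ n])
qed

lemma self_adjoint_upper_triangular_diagonal:
  fixes B :: "complex mat"
  assumes "B \<in> carrier_mat n n" "upper_triangular B" "mat_adjoint B = B"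
  shows "diagonal_mat B"
  unfolding diagonal_mat_def
proof (intro allI impI)
  fix i j assume ij: "i < dim_row B" "j < dim_col B" "i \<noteq> j"
  show "B $$ (i, j) = 0"
  proof (cases "j < i")
    case False
    then have "B $$ (j, i) = 0" using assms(1,2) ij by (auto simp: upper_triangular_def)
    moreover have "B $$ (i, j) = cnj (B $$ (j, i))"
      using arg_cong[OF assms(3), of "\<lambda>M. M $$ (i, j)"] assms(1) ij by simp
    ultimately show ?thesis by simp
  qed (use assms ij in \<open>auto simp: upper_triangular_def\<close>)
qed

lemma hermitian_unitary_diagonalization:
  fixes A :: "complex mat"
  assumes A: "A \<in> carrier_mat n n" and herm: "hermitian_mat A"
  obtains B P where "similar_mat_wit A B P (mat_adjoint P)" "diagonal_mat B"
    "char_poly A = (\<Prod>k<n. [:- B $$ (k, k), 1:])"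
proof -
  obtain es where es: "char_poly A = (\<Prod>e \<leftarrow> es. [:- e, 1:])"
    using char_poly_factorized[OF A] by blast
  then obtain B P where sim: "similar_mat_wit A B P (mat_adjoint P)"
    and ut: "upper_triangular B" and diag: "diag_mat B = es"
    using unitary_schur_decomposition[OF A] by blast
  have B: "B \<in> carrier_mat n n" using similar_mat_witD2[OF A sim] by simp
  have "diagonal_mat B"
    using self_adjoint_upper_triangular_diagonal[OF B ut]
      unitary_similar_self_adjoint[OF A sim hermitian_mat_adjoint[OF herm]] by simp
  moreover have "char_poly A = (\<Prod>k<n. [:- B $$ (k, k), 1:])"
  proof -
    have "es = map (\<lambda>k. B $$ (k, k)) [0..<n]" using diag B unfolding diag_mat_def by auto
    then have "char_poly A = (\<Prod>k \<leftarrow> [0..<n]. [:- B $$ (k, k), 1:])" using es by (simp add: comp_def)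
    also have "\<dots> = (\<Prod>k<n. [:- B $$ (k, k), 1:])"
      by (simp add: prod.distinct_set_conv_list[symmetric] atLeast0LessThan)
    finally show ?thesis .
  qed
  ultimately show ?thesis using sim that by blast
qed

lemma diagonal_mat_mult_vec_index:
  assumes "B \<in> carrier_mat n n" "diagonal_mat B" "x \<in> carrier_vec n" "k < n"
  shows "(B *\<^sub>v x) $ k = B $$ (k, k) * x $ k"
proof -
  have "(B *\<^sub>v x) $ k = (\<Sum>l\<in>{0..<n}. B $$ (k, l) * x $ l)"
    using assms by (simp add: scalar_prod_def)
  also have "\<dots> = (\<Sum>l\<in>{0..<n}. if l = k then B $$ (k, k) * x $ k else 0)"
    using assms by (intro sum.cong) (auto simp: diagonal_mat_def)
  finally show ?thesis using assms(4) by simp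
qed

lemma cinner_unitary_coordinates:
  fixes Q :: "complex mat"
  assumes Q: "Q \<in> carrier_mat n n" "mat_adjoint Q * Q = 1\<^sub>m n"
    and x: "x \<in> carrier_vec n" and y: "y \<in> carrier_vec n"
  shows "(\<Sum>k<n. (Q *\<^sub>v x) $ k * cnj ((Q *\<^sub>v y) $ k)) = cinner x y"
proof -
  have "(\<Sum>k<n. (Q *\<^sub>v x) $ k * cnj ((Q *\<^sub>v y) $ k)) = (Q *\<^sub>v x) \<bullet>c (Q *\<^sub>v y)"
    unfolding scalar_prod_def using Q by (simp add: lessThan_atLeast0)
  also have "\<dots> = x \<bullet>c y" by (rule unitary_cscalar[OF Q x y])
  also have "\<dots> = cinner x y" using x y by (simp add: cinner_def scalar_prod_def lessThan_atLeast0)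
  finally show ?thesis .
qed

lemma residual_norm_in_eigenbasis:
  fixes A :: "complex mat"
  assumes A: "A \<in> carrier_mat n n" and sim: "similar_mat_wit A B P (mat_adjoint P)"
    and diag: "diagonal_mat B" and v: "v \<in> carrier_vec n"
  shows "(\<Sum>k<n. (cmod (B $$ (k, k) - \<mu>))\<^sup>2 * (cmod ((mat_adjoint P *\<^sub>v v) $ k))\<^sup>2)
    = (norm2 ((A - \<mu> \<cdot>\<^sub>m 1\<^sub>m n) *\<^sub>v v))\<^sup>2"
proof -
  let ?Q = "mat_adjoint P" and ?y = "mat_adjoint P *\<^sub>v v" and ?r = "(A - \<mu> \<cdot>\<^sub>m 1\<^sub>m n) *\<^sub>v v"
  have B: "B \<in> carrier_mat n n" and P: "P \<in> carrier_mat n n"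
    and Q: "?Q \<in> carrier_mat n n" "mat_adjoint ?Q * ?Q = 1\<^sub>m n"
    using similar_mat_witD2[OF A sim] by auto
  have "(\<mu> \<cdot>\<^sub>m 1\<^sub>m n) *\<^sub>v v = \<mu> \<cdot>\<^sub>v (1\<^sub>m n *\<^sub>v v)" using v by auto
  then have "?Q *\<^sub>v ?r = ?Q *\<^sub>v (A *\<^sub>v v) - \<mu> \<cdot>\<^sub>v ?y"
    using A Q v by (simp add: minus_mult_distrib_mat_vec mult_minus_distrib_mat_vec mult_mat_vec)
  also have "?Q *\<^sub>v (A *\<^sub>v v) = B *\<^sub>v ?y"
    using similar_mat_wit_intertwines[OF A sim] A B Q v by (metis assoc_mult_mat_vec)
  finally have Qr: "?Q *\<^sub>v ?r = B *\<^sub>v ?y - \<mu> \<cdot>\<^sub>v ?y" .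
  have Qr_index: "(?Q *\<^sub>v ?r) $ k = (B $$ (k, k) - \<mu>) * ?y $ k" if "k < n" for k
  proof -
    have "(?Q *\<^sub>v ?r) $ k = (B *\<^sub>v ?y) $ k - \<mu> * ?y $ k" unfolding Qr using B P that by simp
    then show ?thesis using diagonal_mat_mult_vec_index[OF B diag _ that] Q v by (simp add: algebra_simps)
  qed
  have "?r \<in> carrier_vec n"
    using A v by (metis mult_mat_vec_carrier minus_carrier_mat one_carrier_mat smult_carrier_mat)
  then have "(norm2 ?r)\<^sup>2 = (norm2 (?Q *\<^sub>v ?r))\<^sup>2"
    using unitary_norm2[OF Q] by simp
  also have "\<dots> = (\<Sum>k<n. (cmod ((?Q *\<^sub>v ?r) $ k))\<^sup>2)"
    unfolding norm2_def using P by (subst real_sqrt_pow2) (simp_all add: sum_nonneg del: index_mult_mat_vec)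
  also have "\<dots> = (\<Sum>k<n. (cmod ((B $$ (k, k) - \<mu>) * ?y $ k))\<^sup>2)"
    by (intro sum.cong refl) (simp add: Qr_index del: index_mult_mat_vec)
  also have "\<dots> = (\<Sum>k<n. (cmod (B $$ (k, k) - \<mu>))\<^sup>2 * (cmod (?y $ k))\<^sup>2)"
    by (simp add: norm_mult power_mult_distrib)
  finally show ?thesis by simp
qed

section \<open>Hall's marriage theorem\<close>

definition hall_condition :: "('a \<Rightarrow> 'b set) \<Rightarrow> 'a set \<Rightarrow> bool" where
  "hall_condition N I \<longleftrightarrow> (\<forall>S\<subseteq>I. card S \<le> card (\<Union>(N ` S)))"

lemma hall_condition_subset: "hall_condition N I \<Longrightarrow> J \<subseteq> I \<Longrightarrow> hall_condition N J"
  unfolding hall_condition_def by auto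

lemma hall_condition_remove_critical:
  assumes hall: "hall_condition N I" and fin: "finite I" "\<forall>i\<in>I. finite (N i)"
    and S0: "S0 \<subseteq> I" "card (\<Union>(N ` S0)) \<le> card S0"
  shows "hall_condition (\<lambda>i. N i - \<Union>(N ` S0)) (I - S0)"
  unfolding hall_condition_def
proof (intro allI impI)
  fix S assume S: "S \<subseteq> I - S0"
  let ?U = "\<Union>(N ` S0)" and ?V = "\<Union>i\<in>S. N i - \<Union>(N ` S0)"
  have finS: "finite S" "finite S0" using S S0 fin by (auto intro: finite_subset)
  have "\<And>i. i \<in> S \<union> S0 \<Longrightarrow> finite (N i)" using S S0 fin by auto
  hence finU: "finite ?U" "finite ?V" using finS by auto
  have "card S + card S0 = card (S \<union> S0)"
    using S finS by (subst card_Un_disjoint) auto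
  also have "\<dots> \<le> card (\<Union>(N ` (S \<union> S0)))"
    using hall S S0 unfolding hall_condition_def by (meson Diff_subset Un_least order_trans)
  also have "\<Union>(N ` (S \<union> S0)) = ?V \<union> ?U" by auto
  also have "card (?V \<union> ?U) = card ?V + card ?U"
    using finU by (intro card_Un_disjoint) auto
  finally show "card S \<le> card ?V" using S0 by linarith
qed

lemma hall_condition_remove_one:
  assumes surplus: "\<And>S. S \<subseteq> I \<Longrightarrow> S \<noteq> {} \<Longrightarrow> S \<noteq> I \<Longrightarrow> card S < card (\<Union>(N ` S))"
    and fin: "finite I" "\<forall>i\<in>I. finite (N i)" and i0: "i0 \<in> I"
  shows "hall_condition (\<lambda>i. N i - {y}) (I - {i0})"
  unfolding hall_condition_def
proof (intro allI impI)
  fix S assume S: "S \<subseteq> I - {i0}"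
  show "card S \<le> card (\<Union>i\<in>S. N i - {y})"
  proof (cases "S = {}")
    case False
    have "card S < card (\<Union>(N ` S))" using surplus[of S] S False i0 by auto
    moreover have "card (\<Union>(N ` S)) - 1 \<le> card (\<Union>(N ` S) - {y})"
      using diff_card_le_card_Diff[of "{y}" "\<Union>(N ` S)"] by simp
    moreover have "(\<Union>i\<in>S. N i - {y}) = \<Union>(N ` S) - {y}" by auto
    ultimately show ?thesis by simp
  qed simp
qed

lemma distinct_representatives_combine:
  assumes f: "inj_on f A" "\<forall>i\<in>A. f i \<in> N i" "f ` A \<subseteq> U"
    and g: "inj_on g (I - A)" "\<forall>i\<in>I - A. g i \<in> N i - U"
  shows "\<exists>\<sigma>. inj_on \<sigma> I \<and> (\<forall>i\<in>I. \<sigma> i \<in> N i)"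
proof -
  let ?\<sigma> = "\<lambda>i. if i \<in> A then f i else g i"
  have cross: "f a \<noteq> g b" if "a \<in> A" "b \<in> I - A" for a b
  proof -
    have "f a \<in> U" using f(3) that(1) by blast
    moreover have "g b \<notin> U" using g(2) that(2) by blast
    ultimately show ?thesis by auto
  qed
  have "inj_on ?\<sigma> I"
  proof (rule inj_onI)
    fix i j assume ij: "i \<in> I" "j \<in> I" "?\<sigma> i = ?\<sigma> j"
    show "i = j"
    proof (cases "i \<in> A"; cases "j \<in> A")
      assume "i \<in> A" "j \<in> A" then show ?thesis using ij f(1) by (simp add: inj_on_def)
    next
      assume "i \<in> A" "j \<notin> A" then show ?thesis using ij cross[of i j] by simp
    next
      assume "i \<notin> A" "j \<in> A" then show ?thesis using ij cross[of j i] by simp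
    next
      assume "i \<notin> A" "j \<notin> A" then show ?thesis using ij g(1) by (simp add: inj_on_def)
    qed
  qed
  moreover have "\<forall>i\<in>I. ?\<sigma> i \<in> N i" using f(2) g(2) by auto
  ultimately show ?thesis by blast
qed

theorem hall_marriage_theorem:
  assumes "finite I" "\<forall>i\<in>I. finite (N i)" "hall_condition N I"
  shows "\<exists>\<sigma>. inj_on \<sigma> I \<and> (\<forall>i\<in>I. \<sigma> i \<in> N i)"
  using assms
proof (induction "card I" arbitrary: I N rule: less_induct)
  case less
  note fin = less.prems(1,2) and hall = less.prems(3)
  show ?case
  proof (cases "\<exists>S0. S0 \<subseteq> I \<and> S0 \<noteq> {} \<and> S0 \<noteq> I \<and> card (\<Union>(N ` S0)) \<le> card S0")
    case True
    then obtain S0 where S0: "S0 \<subseteq> I" "S0 \<noteq> {}" "S0 \<noteq> I" "card (\<Union>(N ` S0)) \<le> card S0"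
      by blast
    let ?U = "\<Union>(N ` S0)"
    have "card S0 < card I" using S0 fin by (meson psubsetI psubset_card_mono)
    then obtain f where f: "inj_on f S0" "\<forall>i\<in>S0. f i \<in> N i"
      using less.hyps[of S0 N] hall_condition_subset[OF hall S0(1)] fin S0(1)
      by (meson finite_subset subsetD)
    have "card (I - S0) < card I"
      using S0 fin by (metis Diff_subset card_Diff_subset card_gt_0_iff diff_less finite_subset subset_empty)
    then obtain g where g: "inj_on g (I - S0)" "\<forall>i\<in>I - S0. g i \<in> N i - ?U"
      using less.hyps[of "I - S0" "\<lambda>i. N i - ?U"] hall_condition_remove_critical[OF hall fin S0(1,4)] fin
      by auto
    have "f ` S0 \<subseteq> ?U" using f(2) by blast
    from distinct_representatives_combine[OF f this g] show ?thesis .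
  next
    case False
    hence surplus: "\<And>S. S \<subseteq> I \<Longrightarrow> S \<noteq> {} \<Longrightarrow> S \<noteq> I \<Longrightarrow> card S < card (\<Union>(N ` S))"
      by (meson not_le)
    show ?thesis
    proof (cases "I = {}")
      case False
      then obtain i0 where i0: "i0 \<in> I" by blast
      have "card {i0} \<le> card (N i0)" using hall i0 unfolding hall_condition_def by force
      then obtain y where y: "y \<in> N i0" by fastforce
      have "card (I - {i0}) < card I" using i0 fin by (meson card_Diff1_less)
      then obtain g where g: "inj_on g (I - {i0})" "\<forall>i\<in>I - {i0}. g i \<in> N i - {y}"
        using less.hyps[of "I - {i0}" "\<lambda>i. N i - {y}"] hall_condition_remove_one[OF surplus fin i0] fin
        by auto
      have "inj_on (\<lambda>_. y) {i0}" "\<forall>i\<in>{i0}. y \<in> N i" "(\<lambda>_. y) ` {i0} \<subseteq> {y}" using y by auto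
      from distinct_representatives_combine[OF this g] show ?thesis .
    qed simp
  qed
qed

section \<open>Matching residual windows to eigenvalues\<close>

lemma exists_nontrivial_homogeneous_solution:
  fixes f :: "'a \<Rightarrow> 'b \<Rightarrow> 'c::field"
  assumes "finite T" "finite S" "card T < card S"
  shows "\<exists>x. (\<exists>j\<in>S. x j \<noteq> 0) \<and> (\<forall>k\<in>T. (\<Sum>j\<in>S. x j * f j k) = 0)"
  using assms
proof (induction T arbitrary: S f rule: finite_induct)
  case empty
  then obtain j where "j \<in> S" by fastforce
  then show ?case by (intro exI[of _ "\<lambda>_. 1"]) auto
next
  case (insert t T)
  show ?case
  proof (cases "\<forall>j\<in>S. f j t = 0")
    case True
    obtain x where "\<exists>j\<in>S. x j \<noteq> 0" "\<forall>k\<in>T. (\<Sum>j\<in>S. x j * f j k) = 0"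
      using insert.IH[of S f] insert.prems insert.hyps by auto
    with True show ?thesis by (intro exI[of _ x]) auto
  next
    case False
    then obtain j0 where j0: "j0 \<in> S" "f j0 t \<noteq> 0" by blast
    let ?S' = "S - {j0}"
    define g where "g j k = f j k - f j t / f j0 t * f j0 k" for j k
    have "card T < card ?S'" using insert.prems insert.hyps j0 by auto
    then obtain y where y: "\<exists>j\<in>?S'. y j \<noteq> 0" "\<forall>k\<in>T. (\<Sum>j\<in>?S'. y j * g j k) = 0"
      using insert.IH[of ?S' g] insert.prems by blast
    define x where "x = y(j0 := - (\<Sum>j\<in>?S'. y j * f j t) / f j0 t)"
    have sum_x: "(\<Sum>j\<in>S. x j * f j k) = (\<Sum>j\<in>?S'. y j * g j k)" for k
    proof -
      have "(\<Sum>j\<in>S. x j * f j k) = x j0 * f j0 k + (\<Sum>j\<in>?S'. y j * f j k)"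
        using sum.remove[OF insert.prems(1) j0(1), of "\<lambda>j. x j * f j k"] by (simp add: x_def)
      also have "\<dots> = (\<Sum>j\<in>?S'. y j * g j k)"
        by (simp add: x_def g_def right_diff_distrib sum_subtractf sum_distrib_right
            flip: sum_divide_distrib mult.assoc)
      finally show ?thesis .
    qed
    have "g j t = 0" for j using j0(2) by (simp add: g_def)
    then have "\<forall>k\<in>insert t T. (\<Sum>j\<in>S. x j * f j k) = 0" using y(2) by (simp add: sum_x)
    moreover have "\<exists>j\<in>S. x j \<noteq> 0" using y(1) by (auto simp: x_def)
    ultimately show ?thesis by blast
  qed
qed

lemma norm_square_orthonormal_combination:
  fixes c :: "'j \<Rightarrow> nat \<Rightarrow> complex" and x :: "'j \<Rightarrow> complex"
  assumes S: "finite S"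
    and orth: "\<And>i j. i \<in> S \<Longrightarrow> j \<in> S \<Longrightarrow> (\<Sum>k<n. c i k * cnj (c j k)) = (if i = j then 1 else 0)"
  shows "(\<Sum>k<n. (cmod (\<Sum>j\<in>S. x j * c j k))\<^sup>2) = (\<Sum>j\<in>S. (cmod (x j))\<^sup>2)"
proof -
  have "complex_of_real (\<Sum>k<n. (cmod (\<Sum>j\<in>S. x j * c j k))\<^sup>2)
      = (\<Sum>k<n. (\<Sum>i\<in>S. x i * c i k) * cnj (\<Sum>j\<in>S. x j * c j k))"
    unfolding of_real_sum complex_norm_square ..
  also have "\<dots> = (\<Sum>k<n. \<Sum>j\<in>S. \<Sum>i\<in>S. x i * cnj (x j) * (c i k * cnj (c j k)))"
    by (simp add: sum_distrib_left sum_distrib_right mult_ac)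
  also have "\<dots> = (\<Sum>j\<in>S. \<Sum>i\<in>S. x i * cnj (x j) * (\<Sum>k<n. c i k * cnj (c j k)))"
    by (simp add: sum_distrib_left sum.swap[of _ "{..<n}"])
  also have "\<dots> = (\<Sum>j\<in>S. \<Sum>i\<in>S. if i = j then x i * cnj (x j) else 0)"
    by (intro sum.cong refl) (simp add: orth)
  also have "\<dots> = (\<Sum>j\<in>S. x j * cnj (x j))"
    using S by simp
  also have "\<dots> = complex_of_real (\<Sum>j\<in>S. (cmod (x j))\<^sup>2)"
    unfolding of_real_sum complex_norm_square ..
  finally show ?thesis by (simp only: of_real_eq_iff)
qed

lemma weighted_tail_bound:
  fixes a b :: "'k \<Rightarrow> real"
  assumes I: "finite I" "K \<subseteq> I" and b: "\<forall>k\<in>I. 0 \<le> b k" and t: "0 < t" and \<epsilon>: "0 \<le> \<epsilon>"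
    and total: "(\<Sum>k\<in>I. (a k)\<^sup>2 * b k) \<le> \<epsilon>\<^sup>2"
    and far: "\<forall>k\<in>K. t * \<epsilon> < a k"
  shows "(\<Sum>k\<in>K. b k) \<le> 1 / t\<^sup>2"
proof (cases "\<epsilon> = 0")
  case True
  have "(\<Sum>k\<in>I. (a k)\<^sup>2 * b k) = 0"
    using total True b by (intro antisym sum_nonneg) auto
  then have "\<forall>k\<in>I. (a k)\<^sup>2 * b k = 0"
    using I(1) b by (subst (asm) sum_nonneg_eq_0_iff) auto
  then have "\<forall>k\<in>K. b k = 0"
    using I(2) far True by fastforce
  then show ?thesis by simp
next
  case False
  have "(t * \<epsilon>)\<^sup>2 * (\<Sum>k\<in>K. b k) = (\<Sum>k\<in>K. (t * \<epsilon>)\<^sup>2 * b k)"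
    by (simp add: sum_distrib_left)
  also have "\<dots> \<le> (\<Sum>k\<in>K. (a k)\<^sup>2 * b k)"
    using far b I(2) t \<epsilon> by (intro sum_mono mult_right_mono power_mono) auto
  also have "\<dots> \<le> (\<Sum>k\<in>I. (a k)\<^sup>2 * b k)"
    using I b far t \<epsilon> by (intro sum_mono2) (auto intro!: mult_nonneg_nonneg)
  also have "\<dots> \<le> \<epsilon>\<^sup>2" by (fact total)
  finally show ?thesis
    using False t \<epsilon> by (simp add: power_mult_distrib field_simps)
qed

lemma combination_tail_bound:
  fixes c :: "'j \<Rightarrow> 'k \<Rightarrow> complex"
  assumes S: "finite S" and x: "\<forall>j\<in>S. cmod (x j) \<le> M"
    and tail: "\<forall>j\<in>S. (\<Sum>k\<in>K. (cmod (c j k))\<^sup>2) \<le> \<tau>"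
  shows "(\<Sum>k\<in>K. (cmod (\<Sum>j\<in>S. x j * c j k))\<^sup>2) \<le> (real (card S))\<^sup>2 * M\<^sup>2 * \<tau>"
proof -
  have "(cmod (\<Sum>j\<in>S. x j * c j k))\<^sup>2 \<le> real (card S) * (\<Sum>j\<in>S. M\<^sup>2 * (cmod (c j k))\<^sup>2)" for k
  proof -
    have "cmod (\<Sum>j\<in>S. x j * c j k) \<le> (\<Sum>j\<in>S. M * cmod (c j k))"
      using x by (intro order_trans[OF norm_sum] sum_mono) (simp add: norm_mult mult_right_mono)
    then have "(cmod (\<Sum>j\<in>S. x j * c j k))\<^sup>2 \<le> (\<Sum>j\<in>S. M * cmod (c j k))\<^sup>2"
      by (simp add: power_mono)
    also have "\<dots> \<le> (\<Sum>j\<in>S. (M * cmod (c j k))\<^sup>2) * real (card S)"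
      by (rule sum_squared_le_sum_of_squares)
    finally show ?thesis by (simp add: power_mult_distrib mult.commute)
  qed
  then have "(\<Sum>k\<in>K. (cmod (\<Sum>j\<in>S. x j * c j k))\<^sup>2)
      \<le> real (card S) * M\<^sup>2 * (\<Sum>j\<in>S. \<Sum>k\<in>K. (cmod (c j k))\<^sup>2)"
    by (simp add: sum_mono sum_distrib_left sum.swap[of _ K] mult.assoc)
  also have "\<dots> \<le> real (card S) * M\<^sup>2 * (real (card S) * \<tau>)"
    using tail sum_mono[of S _ "\<lambda>_. \<tau>"] by (intro mult_left_mono) auto
  finally show ?thesis by (simp add: power2_eq_square mult_ac)
qed

lemma orthonormal_combination_tail_bound:
  fixes c :: "'j \<Rightarrow> nat \<Rightarrow> complex"
  assumes S: "finite S"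
    and orth: "\<And>i j. i \<in> S \<Longrightarrow> j \<in> S \<Longrightarrow> (\<Sum>k<n. c i k * cnj (c j k)) = (if i = j then 1 else 0)"
    and vanish: "\<forall>k\<in>T. (\<Sum>j\<in>S. x j * c j k) = 0" and x: "\<forall>j\<in>S. cmod (x j) \<le> M"
    and tail: "\<forall>j\<in>S. (\<Sum>k\<in>{..<n} - T. (cmod (c j k))\<^sup>2) \<le> \<tau>"
  shows "(\<Sum>j\<in>S. (cmod (x j))\<^sup>2) \<le> (real (card S))\<^sup>2 * M\<^sup>2 * \<tau>"
proof -
  have "(\<Sum>j\<in>S. (cmod (x j))\<^sup>2) = (\<Sum>k<n. (cmod (\<Sum>j\<in>S. x j * c j k))\<^sup>2)"
    using norm_square_orthonormal_combination[OF S orth] by simp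
  also have "\<dots> = (\<Sum>k\<in>{..<n} - T. (cmod (\<Sum>j\<in>S. x j * c j k))\<^sup>2)"
    using vanish by (intro sum.mono_neutral_right) auto
  also have "\<dots> \<le> (real (card S))\<^sup>2 * M\<^sup>2 * \<tau>"
    by (rule combination_tail_bound[OF S x tail])
  finally show ?thesis .
qed

lemma hall_condition_eigenvalue_windows:
  fixes c :: "nat \<Rightarrow> nat \<Rightarrow> complex" and \<alpha> \<mu> :: "nat \<Rightarrow> complex"
  assumes m: "0 < m" and \<epsilon>: "0 \<le> \<epsilon>"
    and orth: "\<And>i j. i < m \<Longrightarrow> j < m \<Longrightarrow> (\<Sum>k<n. c i k * cnj (c j k)) = (if i = j then 1 else 0)"
    and res: "\<And>j. j < m \<Longrightarrow> (\<Sum>k<n. (cmod (\<alpha> k - \<mu> j))\<^sup>2 * (cmod (c j k))\<^sup>2) \<le> \<epsilon>\<^sup>2"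
  shows "hall_condition (\<lambda>j. {k. k < n \<and> cmod (\<mu> j - \<alpha> k) \<le> 2 * real m * \<epsilon>}) {..<m}"
  unfolding hall_condition_def
proof (intro allI impI, rule ccontr)
  fix S assume S: "S \<subseteq> {..<m}"
  let ?T = "\<Union>j\<in>S. {k. k < n \<and> cmod (\<mu> j - \<alpha> k) \<le> 2 * real m * \<epsilon>}"
  assume "\<not> card S \<le> card ?T"
  moreover have finite: "finite S" "finite ?T" using S by (auto intro: finite_subset)
  ultimately obtain x where x: "\<exists>j\<in>S. x j \<noteq> 0" "\<forall>k\<in>?T. (\<Sum>j\<in>S. x j * c j k) = 0"
    using exists_nontrivial_homogeneous_solution[of ?T S c] by auto
  define M where "M = Max (cmod ` x ` S)"
  have M: "\<forall>j\<in>S. cmod (x j) \<le> M" using finite unfolding M_def by auto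
  obtain j0 where j0: "j0 \<in> S" "cmod (x j0) = M"
    using finite x(1) Max_in[of "cmod ` x ` S"] unfolding M_def by fastforce
  have tail: "\<forall>j\<in>S. (\<Sum>k\<in>{..<n} - ?T. (cmod (c j k))\<^sup>2) \<le> 1 / (2 * real m)\<^sup>2"
  proof
    fix j assume "j \<in> S"
    then have "\<forall>k\<in>{..<n} - ?T. 2 * real m * \<epsilon> < cmod (\<alpha> k - \<mu> j)"
      by (auto simp: norm_minus_commute)
    with \<open>j \<in> S\<close> S m \<epsilon> res[of j]
    show "(\<Sum>k\<in>{..<n} - ?T. (cmod (c j k))\<^sup>2) \<le> 1 / (2 * real m)\<^sup>2"
      by (intro weighted_tail_bound[of "{..<n}"]) auto
  qed
  have "M\<^sup>2 \<le> (\<Sum>j\<in>S. (cmod (x j))\<^sup>2)"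
    using member_le_sum[of j0 S "\<lambda>j. (cmod (x j))\<^sup>2"] j0 finite by simp
  also have "\<dots> \<le> (real (card S))\<^sup>2 * M\<^sup>2 * (1 / (2 * real m)\<^sup>2)"
    using S orth by (intro orthonormal_combination_tail_bound[OF finite(1) _ x(2) M tail]) (auto simp: subset_iff)
  also have "\<dots> \<le> M\<^sup>2 / 4"
  proof -
    have "(real (card S))\<^sup>2 \<le> (real m)\<^sup>2" using card_mono[OF _ S] by (simp add: power_mono)
    then have "(real (card S))\<^sup>2 * M\<^sup>2 \<le> (real m)\<^sup>2 * M\<^sup>2" by (simp add: mult_right_mono)
    then show ?thesis using m by (simp add: power_mult_distrib field_simps)
  qed
  finally have "M = 0" by simp
  then show False using x(1) M by auto
qed

lemma eigenvalue_window_matching: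
  fixes c :: "nat \<Rightarrow> nat \<Rightarrow> complex" and \<alpha> \<mu> :: "nat \<Rightarrow> complex"
  assumes "0 < m" "0 \<le> \<epsilon>"
    and "\<And>i j. i < m \<Longrightarrow> j < m \<Longrightarrow> (\<Sum>k<n. c i k * cnj (c j k)) = (if i = j then 1 else 0)"
    and "\<And>j. j < m \<Longrightarrow> (\<Sum>k<n. (cmod (\<alpha> k - \<mu> j))\<^sup>2 * (cmod (c j k))\<^sup>2) \<le> \<epsilon>\<^sup>2"
  shows "\<exists>\<sigma>. inj_on \<sigma> {..<m} \<and> \<sigma> ` {..<m} \<subseteq> {..<n} \<and>
           (\<forall>j<m. cmod (\<mu> j - \<alpha> (\<sigma> j)) \<le> 2 * real m * \<epsilon>)"
  using hall_marriage_theorem[OF _ _ hall_condition_eigenvalue_windows[OF assms]] by auto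

theorem theorem4p2:
  fixes n m :: nat and A :: "complex mat"
    and v r :: "nat \<Rightarrow> complex vec" and lam :: "nat \<Rightarrow> real"
  assumes "0 < m" and "m \<le> n"
    and "A \<in> carrier_mat n n" and "hermitian_mat A"
    and "\<And>j. j < m \<Longrightarrow> v j \<in> carrier_vec n"
    and "\<And>i j. i < m \<Longrightarrow> j < m \<Longrightarrow> cinner (v i) (v j) = (if i = j then 1 else 0)"
    and "\<And>j. j < m \<Longrightarrow> (A - complex_of_real (lam j) \<cdot>\<^sub>m 1\<^sub>m n) *\<^sub>v v j = r j"
  shows "\<exists>\<alpha> :: nat \<Rightarrow> complex. \<exists>\<sigma> :: nat \<Rightarrow> nat.
           char_poly A = (\<Prod>k<n. [:- \<alpha> k, 1:]) \<and>
           inj_on \<sigma> {..<m} \<and> \<sigma> ` {..<m} \<subseteq> {..<n} \<and>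
           (\<forall>j<m. cmod (complex_of_real (lam j) - \<alpha> (\<sigma> j))
                     \<le> 2 * real m * (MAX i\<in>{..<m}. norm2 (r i)))"
proof -
  obtain B P where sim: "similar_mat_wit A B P (mat_adjoint P)" and diag: "diagonal_mat B"
    and cp: "char_poly A = (\<Prod>k<n. [:- B $$ (k, k), 1:])"
    using hermitian_unitary_diagonalization[OF assms(3,4)] by blast
  define Q where "Q = mat_adjoint P"
  define \<epsilon> where "\<epsilon> = (MAX i\<in>{..<m}. norm2 (r i))"
  have Q: "Q \<in> carrier_mat n n" "mat_adjoint Q * Q = 1\<^sub>m n"
    using similar_mat_witD2[OF assms(3) sim] unfolding Q_def by auto
  have r_le: "norm2 (r j) \<le> \<epsilon>" if "j < m" for j
    unfolding \<epsilon>_def using that by (intro Max_ge) auto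
  have orth: "(\<Sum>k<n. (Q *\<^sub>v v i) $ k * cnj ((Q *\<^sub>v v j) $ k)) = (if i = j then 1 else 0)"
    if "i < m" "j < m" for i j
    using cinner_unitary_coordinates[OF Q assms(5)[OF that(1)] assms(5)[OF that(2)]] assms(6) that
    by simp
  have res: "(\<Sum>k<n. (cmod (B $$ (k, k) - complex_of_real (lam j)))\<^sup>2 * (cmod ((Q *\<^sub>v v j) $ k))\<^sup>2)
      \<le> \<epsilon>\<^sup>2" if "j < m" for j
    using residual_norm_in_eigenbasis[OF assms(3) sim diag assms(5)[OF that]] assms(7)[OF that]
      r_le[OF that] norm2_nonneg[of "r j"] unfolding Q_def by (simp add: power_mono)
  have "0 \<le> \<epsilon>" using r_le[OF assms(1)] norm2_nonneg[of "r 0"] by linarith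
  from eigenvalue_window_matching[where c = "\<lambda>j k. (Q *\<^sub>v v j) $ k" and \<alpha> = "\<lambda>k. B $$ (k, k)"
      and \<mu> = "\<lambda>j. complex_of_real (lam j)", OF assms(1) this orth res]
  obtain \<sigma> where "inj_on \<sigma> {..<m}" "\<sigma> ` {..<m} \<subseteq> {..<n}"
    "\<forall>j<m. cmod (complex_of_real (lam j) - B $$ (\<sigma> j, \<sigma> j)) \<le> 2 * real m * \<epsilon>"
    by blast
  with cp show ?thesis unfolding \<epsilon>_def by (intro exI[of _ "\<lambda>k. B $$ (k, k)"] exI[of _ \<sigma>]) simp
qed

end
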